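(* Let $\mu$ be a stationary ergodic probability measure on $\Omega$. If $\mathbb P_0(T_{-1}=\infty)>0$, then almost surely (with respect to the law $\nu$ of the random arrow environment $a$) there are infinitely many optional regeneration positions $m\ge0$ for $a$.
   Context: Notation: $\mathbb N=\{1,2,\dots\}$. Cookie environments $\omega\in\Omega=[0,1]^{\mathbb Z\times\mathbb N}$; shift $(\theta\omega)(x,n)=\omega(x+1,n)$; $\mu$ stationary ergodic means $\theta$-invariant and ergodic. An arrow environment is $a\in\{0,1\}^{\mathbb Z\times\mathbb N}$; the walk on $a$ started at $x$ is the deterministic sequence with $X_0=x$ and $X_n=X_{n-1}+1$ if $a(X_{n-1},k)=1$, $X_n=X_{n-1}-1$ if $a(X_{n-1},k)=0$, where $k=\#\{j\le n-1:X_j=X_{n-1}\}$. The random arrow environment is obtained by taking $\omega\sim\mu$ and independent i.i.d. Uniform$[0,1]$ variables $u(x,n)$, and setting $a(x,n)=\mathbf 1_{\{u(x,n)<\omega(x,n)\}}$; $\nu$ is its law, and the annealed law $\mathbb P_x$ of the walk on this random $a$ started at $x$ coincides with the annealed excited random walk law $\int P_{\omega,x}\,d\mu(\omega)$, where under $P_{\omega,x}$ the walk from $X_{n-1}$ steps right with probability $\omega(X_{n-1},\#\{k\le n-1:X_k=X_{n-1}\})$ and left otherwise. $T_m=\inf\{t\ge0:X_t=m\}$. An integer $m\ge0$ is an optional regeneration position for $a$ if the walk on $a$ started at $m$ never hits $m-1$. *)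

theory Defs
  imports "HOL-Probability.Probability"
begin

definition cookie_index :: "(int \<times> nat) set" where
  "cookie_index = UNIV \<times> {1..}"

definition Omega_M :: "(int \<times> nat \<Rightarrow> real) measure" where
  "Omega_M = PiM cookie_index (\<lambda>_. restrict_space borel {0..1::real})"

definition shift :: "(int \<times> nat \<Rightarrow> real) \<Rightarrow> (int \<times> nat \<Rightarrow> real)" where
  "shift w = (\<lambda>i\<in>cookie_index. w (fst i + 1, snd i))"

definition stationary_ergodic :: "(int \<times> nat \<Rightarrow> real) measure \<Rightarrow> bool" where
  "stationary_ergodic \<mu> \<longleftrightarrow>
     prob_space \<mu> \<and> sets \<mu> = sets Omega_M \<and>
     distr \<mu> Omega_M shift = \<mu> \<and>
     (\<forall>A\<in>sets \<mu>. shift -` A \<inter> space \<mu> = A \<longrightarrow> measure \<mu> A = 0 \<or> measure \<mu> A = 1)"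

text \<open>Arrow environments in {0,1}^(Z x N) (True = 1 = step right).\<close>
definition Arrow_M :: "(int \<times> nat \<Rightarrow> bool) measure" where
  "Arrow_M = PiM cookie_index (\<lambda>_. count_space UNIV)"

definition Unif_M :: "(int \<times> nat \<Rightarrow> real) measure" where
  "Unif_M = PiM cookie_index (\<lambda>_. uniform_measure lborel {0..1::real})"

definition arrow_law :: "(int \<times> nat \<Rightarrow> real) measure \<Rightarrow> (int \<times> nat \<Rightarrow> bool) measure" where
  "arrow_law \<mu> = distr (\<mu> \<Otimes>\<^sub>M Unif_M) Arrow_M
      (\<lambda>(w, u). \<lambda>i\<in>cookie_index. u i < w i)"

text \<open>History X_0,...,X_n of the deterministic walk on the arrow environment a started at x.
  At time n the walk is at y = X_n and uses arrow a(y,k), k = number of j \<le> n with X_j = y.\<close>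
fun walk_hist :: "(int \<times> nat \<Rightarrow> bool) \<Rightarrow> int \<Rightarrow> nat \<Rightarrow> int list" where
  "walk_hist a x 0 = [x]"
| "walk_hist a x (Suc n) =
     (let h = walk_hist a x n; y = last h; k = count_list h y
      in h @ [if a (y, k) then y + 1 else y - 1])"

definition walk :: "(int \<times> nat \<Rightarrow> bool) \<Rightarrow> int \<Rightarrow> nat \<Rightarrow> int" where
  "walk a x n = last (walk_hist a x n)"

definition optional_regeneration :: "(int \<times> nat \<Rightarrow> bool) \<Rightarrow> int \<Rightarrow> bool" where
  "optional_regeneration a m \<longleftrightarrow> m \<ge> 0 \<and> (\<forall>n. walk a m n \<noteq> m - 1)"

end

theory Submission
  imports Defs
begin

text \<open>
  Fix the cookie environment \<open>\<omega>\<close>. Under the quenched law the arrows in different columns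
  \<open>x\<close> are independent, and whether there are infinitely many optional regeneration positions does
  not depend on finitely many columns: as long as the walk started at \<open>m\<close> has not gone below
  \<open>m\<close>, it only reads arrows at sites \<open>\<ge> m\<close>. By Kolmogorov's zero-one law this event \<open>E\<close>
  has quenched probability 0 or 1. Since \<open>E\<close> is invariant under translating the arrows, the set of
  \<open>\<omega>\<close> with quenched probability 1 is shift invariant, so by ergodicity the annealed probability
  \<open>\<nu>(E)\<close> is 0 or 1. Finally \<open>E\<close> is the limsup of the events "\<open>m\<close> is a regeneration position",
  each of which has annealed probability \<open>\<P>\<^sub>0(T\<^sub>-\<^sub>1 = \<infinity>) > 0\<close> by stationarity; hence \<open>\<nu>(E) > 0\<close>
  and so \<open>\<nu>(E) = 1\<close>.
\<close>

subsection \<open>The walk and its regeneration positions\<close>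

lemma walk_hist_not_Nil: "walk_hist a x n \<noteq> []"
  by (cases n) (auto simp: Let_def)

lemma walk_0 [simp]: "walk a x 0 = x"
  by (simp add: walk_def)

lemma walk_Suc:
  "walk a x (Suc n) =
     (if a (walk a x n, count_list (walk_hist a x n) (walk a x n)) then walk a x n + 1 else walk a x n - 1)"
  by (simp add: walk_def Let_def)

lemma walk_hist_cong:
  assumes "\<And>j. j < n \<Longrightarrow> m \<le> walk a x j"
    and "\<And>y k. m \<le> y \<Longrightarrow> 1 \<le> k \<Longrightarrow> a (y, k) = b (y, k)"
  shows "walk_hist a x n = walk_hist b x n"
  using assms(1)
proof (induction n)
  case 0
  show ?case by simp
next
  case (Suc n)
  let ?h = "walk_hist a x n"
  have "count_list ?h (last ?h) \<noteq> 0"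
    using last_in_set[OF walk_hist_not_Nil] by (simp add: count_list_0_iff)
  moreover have "m \<le> last ?h"
    using Suc.prems by (simp add: walk_def)
  ultimately have "a (last ?h, count_list ?h (last ?h)) = b (last ?h, count_list ?h (last ?h))"
    using assms(2) by (simp add: Suc_le_eq)
  with Suc show ?case by (simp add: Let_def)
qed

lemma walk_hist_translate:
  "walk_hist (\<lambda>(y, k). a (y + 1, k)) x n = map (\<lambda>z. z - 1) (walk_hist a (x + 1) n)"
proof (induction n)
  case 0
  show ?case by simp
next
  case (Suc n)
  have "inj (\<lambda>z::int. z - 1)" by (auto intro: injI)
  with Suc walk_hist_not_Nil[of a "x + 1" n] show ?case
    by (simp add: Let_def last_map count_list_map_conv[where f = "\<lambda>z. z - 1"])
qed

definition stays_right :: "(int \<times> nat \<Rightarrow> bool) \<Rightarrow> int \<Rightarrow> bool" where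
  "stays_right a m \<longleftrightarrow> (\<forall>n. walk a m n \<noteq> m - 1)"

lemma stays_right_walk_ge:
  assumes "stays_right a m"
  shows "m \<le> walk a m n"
proof (induction n)
  case 0
  show ?case by simp
next
  case (Suc n)
  have "walk a m (Suc n) \<noteq> m - 1" using assms by (simp add: stays_right_def)
  with Suc show ?case by (auto simp: walk_Suc)
qed

lemma stays_right_cong:
  assumes "\<And>y k. m \<le> y \<Longrightarrow> 1 \<le> k \<Longrightarrow> a (y, k) = b (y, k)"
  shows "stays_right a m \<longleftrightarrow> stays_right b m"
proof -
  have transfer: "stays_right b m"
    if "stays_right a m" and "\<And>y k. m \<le> y \<Longrightarrow> 1 \<le> k \<Longrightarrow> a (y, k) = b (y, k)" for a b
  proof -
    have "walk_hist a m n = walk_hist b m n" for n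
      using walk_hist_cong[of n m a m b] stays_right_walk_ge[OF that(1)] that(2) by blast
    with that(1) show ?thesis by (simp add: stays_right_def walk_def)
  qed
  show ?thesis using transfer[of a b] transfer[of b a] assms by metis
qed

definition translate :: "int \<Rightarrow> (int \<times> nat \<Rightarrow> 'b) \<Rightarrow> (int \<times> nat \<Rightarrow> 'b)" where
  "translate d f = (\<lambda>i\<in>cookie_index. f (fst i + d, snd i))"

lemma shift_eq_translate: "shift = translate 1"
  by (simp add: fun_eq_iff shift_def translate_def)

lemma stays_right_translate: "stays_right (translate 1 a) m \<longleftrightarrow> stays_right a (m + 1)"
proof -
  have "stays_right (translate 1 a) m \<longleftrightarrow> stays_right (\<lambda>(y, k). a (y + 1, k)) m"
    by (rule stays_right_cong) (simp add: translate_def cookie_index_def)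
  also have "\<dots> \<longleftrightarrow> stays_right a (m + 1)"
    unfolding stays_right_def walk_def walk_hist_translate by (simp add: last_map walk_hist_not_Nil)
  finally show ?thesis .
qed

lemma infinite_regenerations_iff:
  "infinite {m. optional_regeneration a m} \<longleftrightarrow> (\<exists>\<^sub>F m in sequentially. stays_right a (int m))"
proof -
  have "{m. optional_regeneration a m} = int ` {m. stays_right a (int m)}"
    by (auto simp: optional_regeneration_def stays_right_def image_iff) (metis nonneg_int_cases)
  then show ?thesis
    by (simp add: finite_image_iff frequently_cofinite flip: cofinite_eq_sequentially)
qed

lemma infinite_regenerations_translate:
  "infinite {m. optional_regeneration (translate 1 a) m} \<longleftrightarrow> infinite {m. optional_regeneration a m}"
proof -
  have "(\<exists>\<^sub>F m in sequentially. stays_right a (int (Suc m))) \<longleftrightarrow> (\<exists>\<^sub>F m in sequentially. stays_right a (int m))"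
    unfolding frequently_def by (subst eventually_sequentially_Suc[of "\<lambda>m. \<not> stays_right a (int m)"]) simp
  then show ?thesis
    by (simp add: infinite_regenerations_iff stays_right_translate add.commute)
qed

lemma infinite_regenerations_cong:
  assumes "\<And>y k. int n \<le> y \<Longrightarrow> 1 \<le> k \<Longrightarrow> a (y, k) = b (y, k)"
  shows "infinite {m. optional_regeneration a m} \<longleftrightarrow> infinite {m. optional_regeneration b m}"
  unfolding infinite_regenerations_iff
  by (rule frequently_cong[OF eventually_ge_at_top[of n]]) (intro stays_right_cong assms; simp)

subsection \<open>Measurability\<close>

lemma space_Arrow_M: "space Arrow_M = (\<Pi>\<^sub>E i\<in>cookie_index. UNIV)"
  by (simp add: Arrow_M_def space_PiM)

lemma measurable_Arrow_M_component: "(\<lambda>a. a i) \<in> measurable Arrow_M (count_space UNIV)"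
proof (cases "i \<in> cookie_index")
  case True
  then show ?thesis unfolding Arrow_M_def by (rule measurable_component_singleton)
next
  case False
  then have "undefined = a i" if "a \<in> space Arrow_M" for a
    using that by (metis PiE_arb space_Arrow_M)
  moreover have "(\<lambda>a. undefined :: bool) \<in> measurable Arrow_M (count_space UNIV)"
    by simp
  ultimately show ?thesis
    using measurable_cong[of Arrow_M "\<lambda>_. undefined" "\<lambda>a. a i"] by simp
qed

lemma measurable_walk_hist: "(\<lambda>a. walk_hist a x n) \<in> measurable Arrow_M (count_space UNIV)"
proof (induction n)
  case 0
  show ?case unfolding walk_hist.simps by (rule measurable_const) simp
next
  case (Suc n)
  let ?step = "\<lambda>h a. h @ [if a (last h, count_list h (last h)) then last h + 1 else last h - 1]"
  have "(\<lambda>a. ?step h a) \<in> measurable Arrow_M (count_space UNIV)" for h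
    by (rule measurable_compose[OF measurable_Arrow_M_component measurable_count_space])
  from measurable_compose_countable[OF this Suc]
  show ?case unfolding walk_hist.simps Let_def .
qed

lemma measurable_walk: "(\<lambda>a. walk a x n) \<in> measurable Arrow_M (count_space UNIV)"
  unfolding walk_def by (rule measurable_compose[OF measurable_walk_hist measurable_count_space])

definition stays_right_set :: "int \<Rightarrow> (int \<times> nat \<Rightarrow> bool) set" where
  "stays_right_set m = {a \<in> space Arrow_M. stays_right a m}"

definition regenerating_set :: "(int \<times> nat \<Rightarrow> bool) set" where
  "regenerating_set = {a \<in> space Arrow_M. infinite {m. optional_regeneration a m}}"

lemma regenerating_set_limsup:
  "regenerating_set = (\<Inter>N. \<Union>m\<in>{N..}. stays_right_set (int m))"
  unfolding regenerating_set_def stays_right_set_def infinite_regenerations_iff frequently_sequentially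
  by blast

lemma stays_right_set_sets: "stays_right_set m \<in> sets Arrow_M"
proof -
  have "stays_right_set m = (\<Inter>n. (\<lambda>a. walk a m n) -` (UNIV - {m - 1}) \<inter> space Arrow_M)"
    by (auto simp: stays_right_set_def stays_right_def)
  also have "\<dots> \<in> sets Arrow_M"
    using measurable_sets[OF measurable_walk] by (intro sets.countable_INT) auto
  finally show ?thesis .
qed

lemma regenerating_set_sets: "regenerating_set \<in> sets Arrow_M"
  unfolding regenerating_set_limsup
  using stays_right_set_sets by (intro sets.countable_INT) (auto intro!: sets.countable_UN)

lemma translate_in_space_PiM:
  "f \<in> space (Pi\<^sub>M cookie_index (\<lambda>_. M)) \<Longrightarrow> translate d f \<in> space (Pi\<^sub>M cookie_index (\<lambda>_. M))"
  by (auto simp: translate_def space_PiM cookie_index_def)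

lemma measurable_translate:
  "translate d \<in> measurable (Pi\<^sub>M cookie_index (\<lambda>_. M)) (Pi\<^sub>M cookie_index (\<lambda>_. M))"
  unfolding translate_def[abs_def]
  by (intro measurable_restrict measurable_component_singleton) (auto simp: cookie_index_def)

lemma distr_PiM_translate:
  assumes "prob_space M"
  shows "distr (Pi\<^sub>M cookie_index (\<lambda>_. M)) (Pi\<^sub>M cookie_index (\<lambda>_. M)) (translate d) = Pi\<^sub>M cookie_index (\<lambda>_. M)"
proof -
  have "inj_on (\<lambda>i. (fst i + d, snd i)) cookie_index"
    and "(\<lambda>i. (fst i + d, snd i)) \<in> cookie_index \<rightarrow> cookie_index"
    by (auto simp: inj_on_def cookie_index_def)
  from distr_PiM_reindex[OF assms this] show ?thesis
    by (simp add: translate_def[abs_def])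
qed

lemma stays_right_set_translate:
  "translate 1 -` stays_right_set m \<inter> space Arrow_M = stays_right_set (m + 1)"
  using translate_in_space_PiM[of _ "count_space UNIV"]
  by (auto simp: stays_right_set_def stays_right_translate Arrow_M_def)

lemma regenerating_set_translate:
  "translate 1 -` regenerating_set \<inter> space Arrow_M = regenerating_set"
  using translate_in_space_PiM[of _ "count_space UNIV"]
  by (auto simp: regenerating_set_def infinite_regenerations_translate Arrow_M_def)

subsection \<open>The quenched law of the arrows\<close>

definition arrows :: "(int \<times> nat \<Rightarrow> real) \<Rightarrow> (int \<times> nat \<Rightarrow> real) \<Rightarrow> (int \<times> nat \<Rightarrow> bool)" where
  "arrows w u = (\<lambda>i\<in>cookie_index. u i < w i)"

definition quenched_law :: "(int \<times> nat \<Rightarrow> real) \<Rightarrow> (int \<times> nat \<Rightarrow> bool) measure" where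
  "quenched_law w = distr Unif_M Arrow_M (arrows w)"

lemma prob_space_uniform_unit: "prob_space (uniform_measure lborel {0..1::real})"
  by (rule prob_space_uniform_measure) auto

lemma prob_space_Unif_M: "prob_space Unif_M"
  unfolding Unif_M_def by (intro prob_space_PiM prob_space_uniform_unit)

lemma space_Unif_M: "space Unif_M = (\<Pi>\<^sub>E i\<in>cookie_index. UNIV)"
  by (simp add: Unif_M_def space_PiM)

lemma distr_Unif_M_translate: "distr Unif_M Unif_M (translate d) = Unif_M"
  unfolding Unif_M_def by (intro distr_PiM_translate prob_space_uniform_unit)

lemma measurable_Unif_M_component:
  assumes "i \<in> cookie_index"
  shows "(\<lambda>u. u i) \<in> borel_measurable Unif_M"
proof -
  have "(\<lambda>u. u i) \<in> measurable Unif_M (uniform_measure lborel {0..1::real})"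
    unfolding Unif_M_def by (rule measurable_component_singleton[OF assms])
  moreover have "sets (uniform_measure lborel {0..1::real}) = sets borel"
    by simp
  ultimately show ?thesis
    using measurable_cong_sets[OF refl] by blast
qed

lemma measurable_Omega_M_component:
  assumes "i \<in> cookie_index"
  shows "(\<lambda>w. w i) \<in> borel_measurable Omega_M"
proof -
  have "(\<lambda>w. w i) \<in> measurable Omega_M (restrict_space borel {0..1::real})"
    unfolding Omega_M_def by (rule measurable_component_singleton[OF assms])
  then show ?thesis by (simp add: measurable_restrict_space2_iff)
qed

lemma measurable_arrows: "arrows w \<in> measurable Unif_M Arrow_M"
proof -
  have "(\<lambda>u. u i < w i) \<in> measurable Unif_M (count_space UNIV)" if "i \<in> cookie_index" for i
    using measurable_Unif_M_component[OF that] by measurable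
  then show ?thesis
    unfolding arrows_def[abs_def] Arrow_M_def by (intro measurable_restrict) auto
qed

lemma measurable_arrows_pair:
  assumes "sets \<mu> = sets Omega_M"
  shows "(\<lambda>(w, u). arrows w u) \<in> measurable (\<mu> \<Otimes>\<^sub>M Unif_M) Arrow_M"
proof -
  have "(\<lambda>x. snd x i < fst x i) \<in> measurable (Omega_M \<Otimes>\<^sub>M Unif_M) (count_space UNIV)"
    if "i \<in> cookie_index" for i
  proof -
    have "(\<lambda>x. snd x i) \<in> borel_measurable (Omega_M \<Otimes>\<^sub>M Unif_M)"
      by (rule measurable_compose[OF measurable_snd measurable_Unif_M_component[OF that]])
    moreover have "(\<lambda>x. fst x i) \<in> borel_measurable (Omega_M \<Otimes>\<^sub>M Unif_M)"
      by (rule measurable_compose[OF measurable_fst measurable_Omega_M_component[OF that]])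
    ultimately show ?thesis by measurable
  qed
  then have "(\<lambda>x. \<lambda>i\<in>cookie_index. snd x i < fst x i) \<in> measurable (Omega_M \<Otimes>\<^sub>M Unif_M) Arrow_M"
    unfolding Arrow_M_def by (intro measurable_restrict) auto
  then show ?thesis
    by (simp add: arrows_def case_prod_beta measurable_cong_sets[OF sets_pair_measure_cong[OF assms refl] refl])
qed

lemma prob_space_quenched_law: "prob_space (quenched_law w)"
  unfolding quenched_law_def by (intro prob_space.prob_space_distr prob_space_Unif_M measurable_arrows)

lemma arrows_shift: "arrows (shift w) u = translate 1 (arrows w (translate (-1) u))"
  by (auto simp: arrows_def shift_def translate_def cookie_index_def fun_eq_iff)

lemma quenched_law_shift: "quenched_law (shift w) = distr (quenched_law w) Arrow_M (translate 1)"
proof -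
  have meas_translate: "translate d \<in> measurable Arrow_M Arrow_M" "translate d \<in> measurable Unif_M Unif_M" for d
    unfolding Arrow_M_def Unif_M_def by (rule measurable_translate)+
  have "distr (quenched_law w) Arrow_M (translate 1) = distr Unif_M Arrow_M (translate 1 \<circ> arrows w)"
    unfolding quenched_law_def by (rule distr_distr[OF meas_translate(1) measurable_arrows])
  also have "\<dots> = distr (distr Unif_M Unif_M (translate (-1))) Arrow_M (translate 1 \<circ> arrows w)"
    by (simp add: distr_Unif_M_translate)
  also have "\<dots> = distr Unif_M Arrow_M (translate 1 \<circ> arrows w \<circ> translate (-1))"
    by (rule distr_distr[OF measurable_comp[OF measurable_arrows meas_translate(1)] meas_translate(2)])
  also have "translate 1 \<circ> arrows w \<circ> translate (-1) = arrows (shift w)"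
    by (simp add: fun_eq_iff arrows_shift)
  finally show ?thesis by (simp add: quenched_law_def)
qed

lemma emeasure_quenched_law_shift:
  assumes "A \<in> sets Arrow_M"
  shows "emeasure (quenched_law (shift w)) A = emeasure (quenched_law w) (translate 1 -` A \<inter> space Arrow_M)"
proof -
  have "translate 1 \<in> measurable Arrow_M Arrow_M"
    unfolding Arrow_M_def by (rule measurable_translate)
  then have "translate 1 \<in> measurable (quenched_law w) Arrow_M"
    unfolding quenched_law_def by (simp only: measurable_cong_sets[OF sets_distr refl])
  from emeasure_distr[OF this assms] show ?thesis
    by (simp only: quenched_law_shift) (simp add: quenched_law_def)
qed

lemma emeasure_quenched_law_funpow_shift:
  "emeasure (quenched_law ((shift ^^ N) w)) (stays_right_set m) =
   emeasure (quenched_law w) (stays_right_set (m + int N))"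
proof (induction N arbitrary: w m)
  case 0
  show ?case by simp
next
  case (Suc N)
  have "emeasure (quenched_law ((shift ^^ Suc N) w)) (stays_right_set m) =
        emeasure (quenched_law (shift w)) (stays_right_set (m + int N))"
    using Suc.IH[of "shift w"] by (simp add: funpow_Suc_right del: funpow.simps)
  also have "\<dots> = emeasure (quenched_law w) (translate 1 -` stays_right_set (m + int N) \<inter> space Arrow_M)"
    by (rule emeasure_quenched_law_shift[OF stays_right_set_sets])
  also have "\<dots> = emeasure (quenched_law w) (stays_right_set (m + int (Suc N)))"
    by (simp only: stays_right_set_translate) (simp add: ac_simps)
  finally show ?case .
qed

lemma emeasure_quenched_law_shift_regenerating:
  "emeasure (quenched_law (shift w)) regenerating_set = emeasure (quenched_law w) regenerating_set"
  by (simp add: emeasure_quenched_law_shift regenerating_set_sets regenerating_set_translate)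

subsection \<open>A quenched zero-one law\<close>

definition column :: "nat \<Rightarrow> (int \<times> nat) set" where
  "column n = {int n} \<times> {1..}"

definition column_events :: "nat \<Rightarrow> (int \<times> nat \<Rightarrow> real) set set" where
  "column_events n = sigma_sets (space Unif_M)
     {(\<lambda>u. restrict u (column n)) -` B \<inter> space Unif_M |
        B. B \<in> sets (Pi\<^sub>M (column n) (\<lambda>_. uniform_measure lborel {0..1::real}))}"

lemma indep_vars_Unif_M_components:
  "prob_space.indep_vars Unif_M (\<lambda>_. uniform_measure lborel {0..1::real}) (\<lambda>i u. u i) cookie_index"
proof -
  interpret U: prob_space Unif_M by (rule prob_space_Unif_M)
  have "cookie_index \<noteq> {}" by (auto simp: cookie_index_def)
  moreover have "(\<lambda>u. u i) \<in> measurable Unif_M (uniform_measure lborel {0..1})" if "i \<in> cookie_index" for i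
    unfolding Unif_M_def by (rule measurable_component_singleton[OF that])
  moreover have "distr Unif_M (\<Pi>\<^sub>M i\<in>cookie_index. uniform_measure lborel {0..1}) (\<lambda>u. \<lambda>i\<in>cookie_index. u i) = Unif_M"
  proof -
    have "distr Unif_M Unif_M (\<lambda>u. \<lambda>i\<in>cookie_index. u i) = distr Unif_M Unif_M (\<lambda>u. u)"
      by (rule distr_cong) (auto simp: space_Unif_M PiE_def extensional_def)
    then show ?thesis by (simp add: Unif_M_def)
  qed
  moreover have "(\<Pi>\<^sub>M i\<in>cookie_index. distr Unif_M (uniform_measure lborel {0..1}) (\<lambda>u. u i)) = Unif_M"
    unfolding Unif_M_def by (rule PiM_cong) (auto intro: distr_PiM_component prob_space_uniform_unit)
  ultimately show ?thesis
    by (simp add: U.indep_vars_iff_distr_eq_PiM')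
qed

lemma indep_sets_column_events: "prob_space.indep_sets Unif_M column_events UNIV"
proof -
  interpret U: prob_space Unif_M by (rule prob_space_Unif_M)
  have "disjoint_family_on column UNIV"
    by (auto simp: disjoint_family_on_def column_def)
  moreover have "column n \<subseteq> cookie_index" for n
    by (auto simp: column_def cookie_index_def)
  ultimately have "U.indep_vars (\<lambda>n. Pi\<^sub>M (column n) (\<lambda>_. uniform_measure lborel {0..1}))
      (\<lambda>n u. restrict (\<lambda>i. u i) (column n)) UNIV"
    by (intro U.indep_vars_restrict[OF indep_vars_Unif_M_components])
  then show ?thesis
    unfolding U.indep_vars_def column_events_def by simp
qed

lemma sigma_algebra_column_events: "sigma_algebra (space Unif_M) (column_events n)"
  unfolding column_events_def by (rule sigma_algebra_sigma_sets) auto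

lemma column_events_subset: "S \<in> column_events n \<Longrightarrow> S \<subseteq> space Unif_M"
  unfolding column_events_def by (erule sigma_sets_into_sp[rotated]) auto

lemma
  shows space_sigma_column_events: "space (sigma (space Unif_M) (\<Union> (column_events ` N))) = space Unif_M"
    and sets_sigma_column_events:
      "sets (sigma (space Unif_M) (\<Union> (column_events ` N))) = sigma_sets (space Unif_M) (\<Union> (column_events ` N))"
proof -
  have "\<Union> (column_events ` N) \<subseteq> Pow (space Unif_M)"
    using column_events_subset by blast
  then show "space (sigma (space Unif_M) (\<Union> (column_events ` N))) = space Unif_M"
    and "sets (sigma (space Unif_M) (\<Union> (column_events ` N))) = sigma_sets (space Unif_M) (\<Union> (column_events ` N))"
    by (simp_all add: space_measure_of sets_measure_of)
qed

definition cut_below :: "nat \<Rightarrow> (int \<times> nat \<Rightarrow> real) \<Rightarrow> (int \<times> nat \<Rightarrow> real)" where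
  "cut_below n u = (\<lambda>i\<in>cookie_index. if int n \<le> fst i then u i else 0)"

lemma measurable_cut_below:
  "cut_below n \<in> measurable (sigma (space Unif_M) (\<Union> (column_events ` {n..}))) Unif_M"
proof -
  let ?M = "sigma (space Unif_M) (\<Union> (column_events ` {n..}))"
  let ?U = "uniform_measure lborel {0..1::real}"
  have "(\<lambda>u. u i) \<in> measurable ?M ?U" if "i \<in> cookie_index" "int n \<le> fst i" for i
  proof (rule measurableI)
    fix B assume B: "B \<in> sets ?U"
    define m where "m = nat (fst i)"
    have i: "i \<in> column m" "n \<le> m" using that by (auto simp: column_def m_def cookie_index_def)
    let ?B = "(\<lambda>f. f i) -` B \<inter> space (Pi\<^sub>M (column m) (\<lambda>_. ?U))"
    have "?B \<in> sets (Pi\<^sub>M (column m) (\<lambda>_. ?U))"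
      by (rule measurable_sets[OF measurable_component_singleton[OF i(1)] B])
    then have "(\<lambda>u. restrict u (column m)) -` ?B \<inter> space Unif_M \<in> column_events m"
      unfolding column_events_def by (intro sigma_sets.Basic) blast
    moreover have "(\<lambda>u. u i) -` B \<inter> space ?M = (\<lambda>u. restrict u (column m)) -` ?B \<inter> space Unif_M"
      using i(1) by (auto simp: space_sigma_column_events space_PiM)
    ultimately show "(\<lambda>u. u i) -` B \<inter> space ?M \<in> sets ?M"
      unfolding sets_sigma_column_events using i(2) by (intro sigma_sets.Basic) auto
  qed simp
  then have "(\<lambda>u. if int n \<le> fst i then u i else 0) \<in> measurable ?M ?U" if "i \<in> cookie_index" for i
    using that by (cases "int n \<le> fst i") simp_all
  then show ?thesis
    unfolding cut_below_def[abs_def] Unif_M_def by (intro measurable_restrict)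
qed

lemma quenched_zero_one_law:
  assumes A: "A \<in> sets Arrow_M"
    and tail: "\<And>n a b. a \<in> space Arrow_M \<Longrightarrow> b \<in> space Arrow_M \<Longrightarrow>
      (\<And>i. i \<in> cookie_index \<Longrightarrow> int n \<le> fst i \<Longrightarrow> a i = b i) \<Longrightarrow> a \<in> A \<longleftrightarrow> b \<in> A"
  shows "measure (quenched_law w) A = 0 \<or> measure (quenched_law w) A = 1"
proof -
  interpret U: prob_space Unif_M by (rule prob_space_Unif_M)
  let ?X = "arrows w -` A \<inter> space Unif_M"
  have arrows_space: "arrows w u \<in> space Arrow_M" for u
    by (auto simp: arrows_def space_Arrow_M)
  have "?X \<in> sigma_sets (space Unif_M) (\<Union> (column_events ` {n..}))" for n
  proof -
    \<comment> \<open>\<open>A\<close> does not see the columns left of \<open>n\<close>, and \<open>cut_below n\<close> only reads the columns \<open>\<ge> n\<close>\<close>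
    have "arrows w (cut_below n u) \<in> A \<longleftrightarrow> arrows w u \<in> A" for u
      by (rule tail[where n = n, OF arrows_space arrows_space]) (simp add: arrows_def cut_below_def)
    moreover have "cut_below n u \<in> space Unif_M" for u
      by (auto simp: space_Unif_M cut_below_def)
    ultimately have "?X = cut_below n -` ?X \<inter> space (sigma (space Unif_M) (\<Union> (column_events ` {n..})))"
      by (auto simp: space_sigma_column_events)
    also have "\<dots> \<in> sets (sigma (space Unif_M) (\<Union> (column_events ` {n..})))"
      by (rule measurable_sets[OF measurable_cut_below measurable_sets[OF measurable_arrows A]])
    finally show ?thesis by (simp add: sets_sigma_column_events)
  qed
  then have "U.prob ?X = 0 \<or> U.prob ?X = 1"
    by (intro U.kolmogorov_0_1_law[OF sigma_algebra_column_events indep_sets_column_events])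
      (simp add: U.tail_events_def)
  moreover have "measure (quenched_law w) A = U.prob ?X"
    unfolding quenched_law_def by (rule measure_distr[OF measurable_arrows A])
  ultimately show ?thesis by simp
qed

lemma quenched_zero_one_regenerating:
  "measure (quenched_law w) regenerating_set = 0 \<or> measure (quenched_law w) regenerating_set = 1"
proof (rule quenched_zero_one_law[OF regenerating_set_sets])
  fix n and a b :: "int \<times> nat \<Rightarrow> bool"
  assume "\<And>i. i \<in> cookie_index \<Longrightarrow> int n \<le> fst i \<Longrightarrow> a i = b i"
  then have "infinite {m. optional_regeneration a m} \<longleftrightarrow> infinite {m. optional_regeneration b m}"
    by (intro infinite_regenerations_cong[of n]) (simp add: cookie_index_def)
  then show "a \<in> regenerating_set \<longleftrightarrow> b \<in> regenerating_set"
    if "a \<in> space Arrow_M" "b \<in> space Arrow_M"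
    using that by (simp add: regenerating_set_def)
qed

subsection \<open>The annealed law under a stationary ergodic environment\<close>

lemma sets_arrow_law [simp]: "sets (arrow_law \<mu>) = sets Arrow_M"
  and space_arrow_law [simp]: "space (arrow_law \<mu>) = space Arrow_M"
  by (simp_all add: arrow_law_def)

lemma arrow_law_eq: "arrow_law \<mu> = distr (\<mu> \<Otimes>\<^sub>M Unif_M) Arrow_M (\<lambda>(w, u). arrows w u)"
  by (simp add: arrow_law_def arrows_def)

lemma prob_space_arrow_law:
  "prob_space \<mu> \<Longrightarrow> sets \<mu> = sets Omega_M \<Longrightarrow> prob_space (arrow_law \<mu>)"
  unfolding arrow_law_eq
  by (intro prob_space.prob_space_distr measurable_arrows_pair prob_space_pair prob_space_Unif_M)

lemma emeasure_Unif_M_arrows_Pair: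
  assumes "w \<in> space \<mu>" "A \<in> sets Arrow_M"
  shows "emeasure Unif_M (Pair w -` ((\<lambda>(w, u). arrows w u) -` A \<inter> space (\<mu> \<Otimes>\<^sub>M Unif_M))) =
    emeasure (quenched_law w) A"
proof -
  have "Pair w -` ((\<lambda>(w, u). arrows w u) -` A \<inter> space (\<mu> \<Otimes>\<^sub>M Unif_M)) = arrows w -` A \<inter> space Unif_M"
    using assms(1) by (auto simp: space_pair_measure)
  then show ?thesis
    unfolding quenched_law_def by (simp add: emeasure_distr[OF measurable_arrows assms(2)])
qed

lemma measurable_emeasure_quenched_law:
  assumes "A \<in> sets Arrow_M"
  shows "(\<lambda>w. emeasure (quenched_law w) A) \<in> borel_measurable Omega_M"
proof -
  interpret U: prob_space Unif_M by (rule prob_space_Unif_M)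
  have "(\<lambda>(w, u). arrows w u) -` A \<inter> space (Omega_M \<Otimes>\<^sub>M Unif_M) \<in> sets (Omega_M \<Otimes>\<^sub>M Unif_M)"
    by (rule measurable_sets[OF measurable_arrows_pair[OF refl] assms])
  from U.measurable_emeasure_Pair[OF this] show ?thesis
    by (rule measurable_cong[THEN iffD1, rotated]) (erule emeasure_Unif_M_arrows_Pair[OF _ assms])
qed

lemma emeasure_arrow_law:
  assumes "sets \<mu> = sets Omega_M" "A \<in> sets Arrow_M"
  shows "emeasure (arrow_law \<mu>) A = (\<integral>\<^sup>+w. emeasure (quenched_law w) A \<partial>\<mu>)"
proof -
  interpret U: prob_space Unif_M by (rule prob_space_Unif_M)
  note meas = measurable_arrows_pair[OF assms(1)]
  have "emeasure (arrow_law \<mu>) A = emeasure (\<mu> \<Otimes>\<^sub>M Unif_M) ((\<lambda>(w, u). arrows w u) -` A \<inter> space (\<mu> \<Otimes>\<^sub>M Unif_M))"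
    unfolding arrow_law_eq by (rule emeasure_distr[OF meas assms(2)])
  also have "\<dots> = (\<integral>\<^sup>+w. emeasure Unif_M (Pair w -` ((\<lambda>(w, u). arrows w u) -` A \<inter> space (\<mu> \<Otimes>\<^sub>M Unif_M))) \<partial>\<mu>)"
    by (rule U.emeasure_pair_measure_alt[OF measurable_sets[OF meas assms(2)]])
  also have "\<dots> = (\<integral>\<^sup>+w. emeasure (quenched_law w) A \<partial>\<mu>)"
    by (intro nn_integral_cong emeasure_Unif_M_arrows_Pair assms(2))
  finally show ?thesis .
qed

lemma measurable_shift: "shift \<in> measurable Omega_M Omega_M"
  unfolding shift_eq_translate Omega_M_def by (rule measurable_translate)

lemma measurable_funpow_shift: "shift ^^ N \<in> measurable Omega_M Omega_M"
  by (induction N) (auto intro: measurable_compose[OF _ measurable_shift])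

lemma distr_funpow_shift:
  assumes "sets \<mu> = sets Omega_M" and "distr \<mu> Omega_M shift = \<mu>"
  shows "distr \<mu> Omega_M (shift ^^ N) = \<mu>"
proof (induction N)
  case 0
  show ?case using distr_id2[OF assms(1)[symmetric]] by (simp add: id_def)
next
  case (Suc N)
  have "shift ^^ N \<in> measurable \<mu> Omega_M"
    using measurable_funpow_shift by (simp add: measurable_cong_sets[OF assms(1) refl])
  then have "distr \<mu> Omega_M (shift \<circ> shift ^^ N) = distr (distr \<mu> Omega_M (shift ^^ N)) Omega_M shift"
    by (rule distr_distr[OF measurable_shift, symmetric])
  with Suc assms(2) show ?case by (simp only: funpow.simps(2))
qed

lemma emeasure_arrow_law_stays_right:
  assumes "sets \<mu> = sets Omega_M" and "distr \<mu> Omega_M shift = \<mu>"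
  shows "emeasure (arrow_law \<mu>) (stays_right_set (int N)) = emeasure (arrow_law \<mu>) (stays_right_set 0)"
proof -
  have "emeasure (arrow_law \<mu>) (stays_right_set (int N)) =
        (\<integral>\<^sup>+w. emeasure (quenched_law ((shift ^^ N) w)) (stays_right_set 0) \<partial>\<mu>)"
    using emeasure_quenched_law_funpow_shift[of N _ 0]
    by (simp add: emeasure_arrow_law[OF assms(1) stays_right_set_sets])
  also have "\<dots> = (\<integral>\<^sup>+w. emeasure (quenched_law w) (stays_right_set 0) \<partial>distr \<mu> Omega_M (shift ^^ N))"
    using measurable_funpow_shift measurable_emeasure_quenched_law[OF stays_right_set_sets]
    by (intro nn_integral_distr[symmetric]) (simp_all add: measurable_cong_sets[OF assms(1) refl])
  also have "\<dots> = emeasure (arrow_law \<mu>) (stays_right_set 0)"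
    by (simp add: distr_funpow_shift[OF assms] emeasure_arrow_law[OF assms(1) stays_right_set_sets])
  finally show ?thesis .
qed

lemma emeasure_arrow_law_regenerating_ge:
  assumes "prob_space \<mu>" "sets \<mu> = sets Omega_M" and "distr \<mu> Omega_M shift = \<mu>"
  shows "emeasure (arrow_law \<mu>) (stays_right_set 0) \<le> emeasure (arrow_law \<mu>) regenerating_set"
proof -
  interpret \<nu>: prob_space "arrow_law \<mu>" by (rule prob_space_arrow_law[OF assms(1,2)])
  let ?R = "\<lambda>N. \<Union>m\<in>{N..}. stays_right_set (int m)"
  have "emeasure (arrow_law \<mu>) (stays_right_set 0) \<le> emeasure (arrow_law \<mu>) (?R N)" for N
  proof -
    have "emeasure (arrow_law \<mu>) (stays_right_set (int N)) \<le> emeasure (arrow_law \<mu>) (?R N)"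
      using stays_right_set_sets by (intro emeasure_mono) (auto intro!: sets.countable_UN)
    then show ?thesis by (simp add: emeasure_arrow_law_stays_right[OF assms(2,3)])
  qed
  moreover have "decseq ?R"
    unfolding decseq_def by (meson UN_mono atLeast_iff order.trans subsetI order_refl)
  then have "(INF N. emeasure (arrow_law \<mu>) (?R N)) = emeasure (arrow_law \<mu>) (\<Inter>N. ?R N)"
    using stays_right_set_sets by (intro INF_emeasure_decseq) (auto intro!: sets.countable_UN)
  ultimately show ?thesis
    unfolding regenerating_set_limsup by (metis INF_greatest)
qed

lemma arrow_law_regenerating_zero_one:
  assumes "stationary_ergodic \<mu>"
  shows "emeasure (arrow_law \<mu>) regenerating_set = 0 \<or> emeasure (arrow_law \<mu>) regenerating_set = 1"
proof -
  have sets_\<mu>: "sets \<mu> = sets Omega_M" and prob_\<mu>: "prob_space \<mu>"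
    and ergodic: "\<And>A. A \<in> sets \<mu> \<Longrightarrow> shift -` A \<inter> space \<mu> = A \<Longrightarrow> measure \<mu> A = 0 \<or> measure \<mu> A = 1"
    using assms by (auto simp: stationary_ergodic_def)
  interpret M: prob_space \<mu> by (rule prob_\<mu>)
  have space_\<mu>: "space \<mu> = space Omega_M"
    by (rule sets_eq_imp_space_eq[OF sets_\<mu>])
  define G where "G = {w \<in> space \<mu>. emeasure (quenched_law w) regenerating_set = 1}"
  have "G = (\<lambda>w. emeasure (quenched_law w) regenerating_set) -` {1} \<inter> space \<mu>"
    by (auto simp: G_def)
  also have "\<dots> \<in> sets \<mu>"
    using measurable_emeasure_quenched_law[OF regenerating_set_sets]
    by (intro measurable_sets[of _ \<mu> borel]) (simp_all add: measurable_cong_sets[OF sets_\<mu> refl])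
  finally have G_sets: "G \<in> sets \<mu>" .
  have "shift w \<in> space \<mu>" if "w \<in> space \<mu>" for w
    using measurable_space[OF measurable_shift] that space_\<mu> by auto
  then have G_invariant: "shift -` G \<inter> space \<mu> = G"
    by (auto simp: G_def emeasure_quenched_law_shift_regenerating)
  have "emeasure (quenched_law w) regenerating_set = indicator G w" if "w \<in> space \<mu>" for w
  proof -
    interpret Q: prob_space "quenched_law w" by (rule prob_space_quenched_law)
    show ?thesis using quenched_zero_one_regenerating[of w] that
      by (auto simp: G_def Q.emeasure_eq_measure indicator_def)
  qed
  then have "emeasure (arrow_law \<mu>) regenerating_set = emeasure \<mu> G"
    by (simp add: emeasure_arrow_law[OF sets_\<mu> regenerating_set_sets] nn_integral_indicator[OF G_sets]
        cong: nn_integral_cong)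
  with ergodic[OF G_sets G_invariant] show ?thesis
    by (auto simp: M.emeasure_eq_measure)
qed

theorem lemma3p6:
  fixes \<mu> :: "(int \<times> nat \<Rightarrow> real) measure"
  assumes "stationary_ergodic \<mu>"
    and "measure (arrow_law \<mu>) {a \<in> space (arrow_law \<mu>). \<forall>n. walk a 0 n \<noteq> -1} > 0"
  shows "AE a in arrow_law \<mu>. infinite {m::int. optional_regeneration a m}"
proof -
  have prob_\<mu>: "prob_space \<mu>" and sets_\<mu>: "sets \<mu> = sets Omega_M"
    and stationary: "distr \<mu> Omega_M shift = \<mu>"
    using assms(1) by (auto simp: stationary_ergodic_def)
  interpret \<nu>: prob_space "arrow_law \<mu>" by (rule prob_space_arrow_law[OF prob_\<mu> sets_\<mu>])
  have "{a \<in> space (arrow_law \<mu>). \<forall>n. walk a 0 n \<noteq> -1} = stays_right_set 0"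
    by (simp add: stays_right_set_def stays_right_def)
  with assms(2) have "0 < emeasure (arrow_law \<mu>) (stays_right_set 0)"
    by (simp add: \<nu>.emeasure_eq_measure)
  with emeasure_arrow_law_regenerating_ge[OF prob_\<mu> sets_\<mu> stationary]
    arrow_law_regenerating_zero_one[OF assms(1)]
  have "\<nu>.prob regenerating_set = 1"
    by (auto simp: \<nu>.emeasure_eq_measure)
  then have "AE a in arrow_law \<mu>. a \<in> regenerating_set"
    by (simp add: \<nu>.AE_in_set_eq_1 regenerating_set_sets)
  then show ?thesis
    by (rule AE_mp) (simp add: regenerating_set_def)
qed

end
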